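(* For all integers $n\ge 2$ and $0\le i\le n$, $$|\mathrm{Bal}^*(n,i)|=\binom{2n-2}{n-i-1}-\binom{2n-2}{n-i-2}+\binom{n-2}{n-i}.$$ Moreover, for the same $n,i$, $$\Big|\bigsqcup_{\substack{b\ge\max(i,1),\ k\ge0\\ 2b-i+k=n}}\mathrm{SYT}^{+k}\big((b,b-i)\big)\Big|=\binom{2n-2}{n-i-1}-\binom{2n-2}{n-i-2}+\binom{n-2}{n-i},$$ where $(b,0)$ denotes the one-row shape $(b)$.
   Context: Binomial coefficients $\binom{a}{c}$ with $a\ge0$ are $0$ if $c<0$ or $c>a$. A ballotlike path of length $n$ ending at height $i$ is a lattice path from $(0,0)$ to $(n,i)$ with steps $U=(1,1)$, $D=(1,-1)$ and horizontal steps $(1,0)$ colored umber ($u$) or denim ($d$), never going below the $x$-axis, such that no umber step occurs at height $0$ and no denim step occurs before the first $D$ step. $\mathrm{Bal}^*(n,i)$ is the set of these paths. $\mathrm{SYT}^{+k}(\lambda)$: for a partition $\lambda$ of $N$ and $k\ge0$, the set of fillings of the cells of $\lambda$ by nonempty sets of positive integers forming a set partition of $[N+k]$, with $\max S(u)<\min S(v)$ whenever $u\ne v$ and $u$ is weakly northwest of $v$. *)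

theory Defs
  imports Main
begin

(* Binomial coefficient with nonnegative top a and integer bottom c:
   0 if c < 0 or c > a (the latter is built into nat choose). *)
definition ibinom :: "nat \<Rightarrow> int \<Rightarrow> int" where
  "ibinom a c = (if c < 0 then 0 else int (a choose nat c))"

(* Steps: U=(1,1), D=(1,-1), horizontal umber Hu, horizontal denim Hd *)
datatype step = U | D | Hu | Hd

fun step_val :: "step \<Rightarrow> int" where
  "step_val U = 1"
| "step_val D = -1"
| "step_val Hu = 0"
| "step_val Hd = 0"

definition ht :: "step list \<Rightarrow> int" where
  "ht p = sum_list (map step_val p)"

(* the k-th step (0-indexed) starts at height ht (take k p) *)
definition ballotlike :: "step list \<Rightarrow> bool" where
  "ballotlike p \<longleftrightarrow>
     (\<forall>k\<le>length p. 0 \<le> ht (take k p)) \<and>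
     (\<forall>k<length p. p ! k = Hu \<longrightarrow> ht (take k p) \<noteq> 0) \<and>
     (\<forall>k<length p. p ! k = Hd \<longrightarrow> D \<in> set (take k p))"

definition Bal :: "nat \<Rightarrow> nat \<Rightarrow> step list set" where
  "Bal n i = {p. length p = n \<and> ballotlike p \<and> ht p = int i}"

(* Cells of a partition given as a list of row lengths; (row, column), 0-indexed,
   English convention: "weakly northwest" = row and column both weakly smaller. *)
definition cells :: "nat list \<Rightarrow> (nat \<times> nat) set" where
  "cells lam = {(r, c). r < length lam \<and> c < lam ! r}"

definition SYTplus :: "nat \<Rightarrow> nat list \<Rightarrow> ((nat \<times> nat) \<Rightarrow> nat set) set" where
  "SYTplus k lam = {F.
     (\<forall>x. x \<notin> cells lam \<longrightarrow> F x = {}) \<and>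
     (\<forall>x\<in>cells lam. F x \<noteq> {}) \<and>
     (\<Union>x\<in>cells lam. F x) = {1..sum_list lam + k} \<and>
     (\<forall>x\<in>cells lam. \<forall>y\<in>cells lam. x \<noteq> y \<longrightarrow> F x \<inter> F y = {}) \<and>
     (\<forall>u\<in>cells lam. \<forall>v\<in>cells lam. u \<noteq> v \<and> fst u \<le> fst v \<and> snd u \<le> snd v
         \<longrightarrow> Max (F u) < Min (F v))}"

definition twoRow :: "nat \<Rightarrow> nat \<Rightarrow> nat list" where
  "twoRow b c = (if c = 0 then [b] else [b, c])"

end

theory Submission
  imports Defs
begin

text \<open>
  Deleting the last step of a ballotlike path gives a recurrence for \<open>|Bal*(n,i)|\<close> whose only
  non-local term counts the paths admitting a final denim step, namely those containing a
  \<open>D\<close>; the paths without \<open>D\<close> use only \<open>U\<close> and umber steps and are counted by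
  \<open>C(n-1, i-1)\<close>. The closed form satisfies the same recurrence and agrees at \<open>n = 2\<close>.

  For the second count, a path is read as a filling of the two-row shape \<open>(#U, #D)\<close>: the
  steps \<open>U\<close>, \<open>u\<close> go to the first row, \<open>D\<close>, \<open>d\<close> to the second; an up or down step opens a
  new cell of its row and a horizontal step joins the last cell opened in its row. The ballot
  conditions say exactly that every horizontal step has a cell to join and that the resulting
  filling is standard, with the \<open>k = n - #U - #D\<close> horizontal steps as the extra entries.
  Conversely the path is recovered from the filling: an entry is an up or down step iff it is
  the least entry of its cell.
\<close>

section \<open>Counting ballotlike paths\<close>

lemma ibinom_neg [simp]: "c < 0 \<Longrightarrow> ibinom a c = 0"
  by (simp add: ibinom_def)

lemma ibinom_Suc: "ibinom (Suc a) c = ibinom a c + ibinom a (c - 1)"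
proof (cases "c \<le> 0")
  case False
  then have "nat c = Suc (nat (c - 1))" by linarith
  then show ?thesis using False by (simp add: ibinom_def)
next
  case True
  then show ?thesis by (cases "c = 0") (simp_all add: ibinom_def)
qed

lemma ibinom_symmetric:
  assumes "c + d = int a" shows "ibinom a c = ibinom a d"
proof (cases "0 \<le> c \<and> 0 \<le> d")
  case True
  then have "nat d = a - nat c" "nat c \<le> a" using assms by linarith+
  then show ?thesis using True binomial_symmetric[of "nat c" a] by (simp add: ibinom_def)
next
  case False
  then have "c < 0 \<and> a < nat d \<or> d < 0 \<and> a < nat c" using assms by linarith
  then show ?thesis by (auto simp: ibinom_def binomial_eq_0)
qed

lemma ht_Nil [simp]: "ht [] = 0"
  and ht_Cons [simp]: "ht (s # p) = step_val s + ht p"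
  and ht_append [simp]: "ht (p @ q) = ht p + ht q"
  by (simp_all add: ht_def)

lemma ballotlike_snoc:
  "ballotlike (p @ [s]) \<longleftrightarrow> ballotlike p \<and> 0 \<le> ht p + step_val s
     \<and> (s = Hu \<longrightarrow> ht p \<noteq> 0) \<and> (s = Hd \<longrightarrow> D \<in> set p)"
  unfolding ballotlike_def by (auto simp: All_less_Suc nth_append less_Suc_eq_le[symmetric])

lemma ballotlike_ht_nonneg: "ballotlike p \<Longrightarrow> 0 \<le> ht p"
  unfolding ballotlike_def by (metis order_refl take_all)

lemma finite_Bal [simp]: "finite (Bal n i)"
proof (rule finite_subset)
  show "Bal n i \<subseteq> {p. set p \<subseteq> {U, D, Hu, Hd} \<and> length p = n}"
    by (auto simp: Bal_def intro: step.exhaust)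
qed (simp add: finite_lists_length_eq)

lemma Bal_0: "Bal 0 i = (if i = 0 then {[]} else {})"
  by (auto simp: Bal_def ballotlike_def)

lemma Bal_Suc: "Bal (Suc n) i =
     (\<lambda>p. p @ [U]) ` (if i \<noteq> 0 then Bal n (i - 1) else {})
   \<union> (\<lambda>p. p @ [D]) ` Bal n (Suc i)
   \<union> (\<lambda>p. p @ [Hu]) ` (if i \<noteq> 0 then Bal n i else {})
   \<union> (\<lambda>p. p @ [Hd]) ` {p \<in> Bal n i. D \<in> set p}"
  (is "_ = ?R")
proof
  show "Bal (Suc n) i \<subseteq> ?R"
  proof
    fix p assume p: "p \<in> Bal (Suc n) i"
    then have "length p = Suc n" by (simp add: Bal_def)
    then obtain q s where qs: "p = q @ [s]" "length q = n"
      by (auto simp: length_Suc_conv_rev)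
    have "ballotlike q" "0 \<le> ht q" "s = Hu \<longrightarrow> ht q \<noteq> 0" "s = Hd \<longrightarrow> D \<in> set q"
      "ht q + step_val s = int i"
      using p ballotlike_ht_nonneg by (auto simp: Bal_def qs ballotlike_snoc)
    then show "p \<in> ?R"
      using qs by (cases s) (auto simp: Bal_def)
  qed
qed (auto simp: Bal_def ballotlike_snoc split: if_splits)

lemma card_Bal_Suc: "card (Bal (Suc n) i) =
     (if i \<noteq> 0 then card (Bal n (i - 1)) + card (Bal n i) else 0)
   + card (Bal n (Suc i)) + card {p \<in> Bal n i. D \<in> set p}"
proof -
  have card_snoc: "card ((\<lambda>p. p @ [s]) ` A) = card A" for s and A :: "step list set"
    by (simp add: card_image inj_on_def)
  have disjoint: "(\<lambda>p. p @ [s]) ` A \<inter> (\<lambda>p. p @ [t]) ` B = {}" if "s \<noteq> t"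
    for s t and A B :: "step list set"
    using that by auto
  show ?thesis
    unfolding Bal_Suc
    by (simp add: card_Un_disjoint Int_Un_distrib2 disjoint card_snoc)
qed

definition Bal_no_D :: "nat \<Rightarrow> nat \<Rightarrow> step list set" where
  "Bal_no_D n i = {p \<in> Bal n i. D \<notin> set p}"

lemma card_Bal_split: "card (Bal n i) = card (Bal_no_D n i) + card {p \<in> Bal n i. D \<in> set p}"
  using card_Int_Diff[OF finite_Bal, of n i "{p. D \<in> set p}"]
  by (simp add: Bal_no_D_def set_diff_eq Int_def)

lemma Bal_no_D_0: "Bal_no_D 0 i = (if i = 0 then {[]} else {})"
  by (auto simp: Bal_no_D_def Bal_0)

lemma Bal_no_D_Suc: "Bal_no_D (Suc n) i =
     (\<lambda>p. p @ [U]) ` (if i \<noteq> 0 then Bal_no_D n (i - 1) else {})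
   \<union> (\<lambda>p. p @ [Hu]) ` (if i \<noteq> 0 then Bal_no_D n i else {})"
  unfolding Bal_no_D_def Bal_Suc by auto

lemma card_Bal_no_D_Suc: "card (Bal_no_D (Suc n) i) =
     (if i \<noteq> 0 then card (Bal_no_D n (i - 1)) + card (Bal_no_D n i) else 0)"
  unfolding Bal_no_D_Suc
  by (subst card_Un_disjoint) (auto simp: card_image inj_on_def Bal_no_D_def)

lemma card_Bal_no_D: "int (card (Bal_no_D (Suc n) i)) = ibinom n (int i - 1)"
proof (induction n arbitrary: i)
  case 0
  then show ?case by (simp add: card_Bal_no_D_Suc Bal_no_D_0 ibinom_def)
next
  case (Suc n)
  note IH = Suc.IH
  show ?case
  proof (cases i)
    case (Suc j)
    have "int (card (Bal_no_D (Suc (Suc n)) i))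
        = int (card (Bal_no_D (Suc n) j)) + int (card (Bal_no_D (Suc n) i))"
      using Suc by (simp add: card_Bal_no_D_Suc)
    also have "\<dots> = ibinom (Suc n) (int i - 1)"
      using Suc by (simp add: IH ibinom_Suc)
    finally show ?thesis .
  qed (simp add: card_Bal_no_D_Suc)
qed

lemma card_Bal_Suc_Suc: "int (card (Bal (Suc (Suc n)) i)) =
     (if i \<noteq> 0 then int (card (Bal (Suc n) (i - 1))) + int (card (Bal (Suc n) i)) else 0)
   + int (card (Bal (Suc n) (Suc i))) + int (card (Bal (Suc n) i)) - ibinom n (int i - 1)"
  using card_Bal_Suc[of "Suc n" i] card_Bal_split[of "Suc n" i] card_Bal_no_D[of n i] by simp

text \<open>The last binomial is taken as \<open>C(n-2, i-2)\<close>, which equals \<open>C(n-2, n-i)\<close> for \<open>n \<ge> 2\<close>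
  (\<open>bal_closed_form_eq\<close>) and has the same lower index as the count \<open>C(n-1, i-1)\<close> of the
  paths without \<open>D\<close>; this makes the recurrence an instance of Pascal's rule.\<close>

definition bal_closed_form :: "nat \<Rightarrow> nat \<Rightarrow> int" where
  "bal_closed_form n i = ibinom (2*n-2) (int n - int i - 1) - ibinom (2*n-2) (int n - int i - 2)
     + ibinom (n-2) (int i - 2)"

lemma bal_closed_form_Suc:
  "bal_closed_form (Suc (Suc (Suc m))) i =
     (if i \<noteq> 0 then bal_closed_form (Suc (Suc m)) (i - 1) + bal_closed_form (Suc (Suc m)) i else 0)
     + bal_closed_form (Suc (Suc m)) (Suc i) + bal_closed_form (Suc (Suc m)) i
     - ibinom (Suc m) (int i - 1)"
proof -
  define x where "x = int m + 2 - int i"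
  define b where "b y = ibinom (2*m+2) y" for y
  define d where "d y = ibinom m y" for y
  have lhs: "bal_closed_form (Suc (Suc (Suc m))) i
      = b x + b (x-1) - b (x-2) - b (x-3) + d (int i - 2) + d (int i - 3)"
  proof -
    have "2 * Suc (Suc (Suc m)) - 2 = Suc (Suc (2*m+2))" by simp
    then show ?thesis
      unfolding bal_closed_form_def b_def d_def x_def by (simp add: ibinom_Suc algebra_simps)
  qed
  have rhs: "bal_closed_form (Suc (Suc m)) j = b (int m + 1 - int j) - b (int m - int j) + d (int j - 2)"
    for j
  proof -
    have "2 * Suc (Suc m) - 2 = 2*m+2" by simp
    then show ?thesis unfolding bal_closed_form_def b_def d_def by (simp add: algebra_simps)
  qed
  show ?thesis
  proof (cases i)
    case 0
    have "b x = b (x - 2)"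
      unfolding b_def x_def 0 by (rule ibinom_symmetric) simp
    then show ?thesis using lhs 0 by (simp add: rhs ibinom_Suc d_def x_def algebra_simps)
  next
    case (Suc j)
    then show ?thesis using lhs by (simp add: rhs ibinom_Suc d_def x_def algebra_simps)
  qed
qed

lemma card_Bal_eq_closed_form:
  "int (card (Bal (Suc (Suc m)) i)) = bal_closed_form (Suc (Suc m)) i"
proof (induction m arbitrary: i)
  case 0
  have "int (card (Bal 1 j)) = (if j = 1 then 1 else 0)" for j
    using card_Bal_Suc[of 0 j] by (simp add: Bal_0)
  then have "int (card (Bal 2 i)) = (if i \<le> 2 then 1 else 0)"
    using card_Bal_Suc_Suc[of 0 i] by (auto simp: numeral_2_eq_2 ibinom_def)
  then show ?case
    by (cases "i \<le> 2") (auto simp: bal_closed_form_def ibinom_def numeral_2_eq_2 le_Suc_eq)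
next
  case (Suc m)
  then show ?case
    using card_Bal_Suc_Suc[of "Suc m" i] by (simp add: bal_closed_form_Suc)
qed

lemma bal_closed_form_eq:
  "2 \<le> n \<Longrightarrow> bal_closed_form n i = ibinom (2*n-2) (int n - int i - 1)
     - ibinom (2*n-2) (int n - int i - 2) + ibinom (n-2) (int n - int i)"
  unfolding bal_closed_form_def using ibinom_symmetric[of "int i - 2" "int n - int i" "n - 2"]
  by simp

section \<open>Ballotlike paths as fillings of two-row shapes\<close>

lemma count_list_take_mono:
  assumes "a \<le> b" shows "count_list (take a xs) x \<le> count_list (take b xs) x"
proof -
  obtain d where "b = a + d" using assms le_Suc_ex by blast
  then show ?thesis by (simp add: take_add)
qed

lemma count_list_take_Suc:
  "j < length xs \<Longrightarrow>
     count_list (take (Suc j) xs) x = count_list (take j xs) x + (if xs ! j = x then 1 else 0)"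
  by (simp add: take_Suc_conv_app_nth)

lemma count_list_take_nth:
  "y < count_list xs x \<Longrightarrow> \<exists>j<length xs. xs ! j = x \<and> count_list (take j xs) x = y"
proof (induction xs arbitrary: y)
  case (Cons a xs)
  show ?case
  proof (cases "a = x \<and> y = 0")
    case False
    then obtain y' where "y' < count_list xs x"
      and y: "y = (if a = x then Suc y' else y')"
      using Cons.prems by (cases y) (auto split: if_splits)
    then obtain j where "j < length xs" "xs ! j = x" "count_list (take j xs) x = y'"
      using Cons.IH by blast
    then show ?thesis
      using y by (intro exI[of _ "Suc j"]) auto
  qed auto
qed simp

lemma ht_eq_count: "ht p = int (count_list p U) - int (count_list p D)"
proof (induction p)
  case (Cons s p)
  then show ?case by (cases s) auto
qed simp

lemma count_list_U_D_le_length: "count_list p U + count_list p D \<le> length p"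
proof -
  have "sum (count_list p) {U, D} \<le> sum (count_list p) {U, D, Hu, Hd}"
    by (rule sum_mono2) auto
  also have "\<dots> = length p"
    by (rule sum_count_set) (auto intro: step.exhaust)
  finally show ?thesis by simp
qed

lemma ballotlike_count_le:
  "ballotlike p \<Longrightarrow> k \<le> length p \<Longrightarrow> count_list (take k p) D \<le> count_list (take k p) U"
  unfolding ballotlike_def ht_eq_count by auto

lemma ballotlike_Hu_count_less:
  "ballotlike p \<Longrightarrow> j < length p \<Longrightarrow> p ! j = Hu \<Longrightarrow>
     count_list (take j p) D < count_list (take j p) U"
proof -
  assume "ballotlike p" "j < length p" "p ! j = Hu"
  then have "0 \<le> ht (take j p)" "ht (take j p) \<noteq> 0"
    unfolding ballotlike_def by auto
  then show ?thesis by (simp add: ht_eq_count)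
qed

lemma ballotlike_Hd_count_pos:
  "ballotlike p \<Longrightarrow> j < length p \<Longrightarrow> p ! j = Hd \<Longrightarrow> 0 < count_list (take j p) D"
  unfolding ballotlike_def by (metis count_list_0_iff gr0I)

lemma ballotlike_count_U_pos: "ballotlike p \<Longrightarrow> p \<noteq> [] \<Longrightarrow> 0 < count_list p U"
proof (induction p rule: rev_induct)
  case (snoc s p)
  then have "ballotlike p" "0 \<le> ht p + step_val s"
    "s = Hu \<longrightarrow> ht p \<noteq> 0" "s = Hd \<longrightarrow> D \<in> set p"
    by (simp_all add: ballotlike_snoc)
  then show ?case
    using snoc.IH by (cases "p = []"; cases s) auto
qed simp

fun row_of :: "step \<Rightarrow> nat" where
  "row_of U = 0" | "row_of Hu = 0" | "row_of D = 1" | "row_of Hd = 1"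

text \<open>\<open>row_step r True\<close> opens a new cell of row \<open>r\<close>; \<open>row_step r False\<close> joins the cell
  opened last in row \<open>r\<close>.\<close>

fun row_step :: "nat \<Rightarrow> bool \<Rightarrow> step" where
  "row_step 0 True = U" | "row_step 0 False = Hu"
| "row_step (Suc _) True = D" | "row_step (Suc _) False = Hd"

lemma row_step_1 [simp]: "row_step 1 True = D" "row_step 1 False = Hd"
  unfolding One_nat_def by simp_all

lemma row_of_le_1: "row_of s \<le> 1"
  by (cases s) auto

lemma row_step_row_of: "row_step (row_of s) (s = U \<or> s = D) = s"
  by (cases s) auto

lemma row_of_row_step: "r \<le> 1 \<Longrightarrow> row_of (row_step r b) = r"
  by (cases r; cases b) auto

lemma row_step_eq_iff:
  "r \<le> 1 \<Longrightarrow> r' \<le> 1 \<Longrightarrow> row_step r b = row_step r' b' \<longleftrightarrow> r = r' \<and> b = b'"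
  by (cases r; cases r'; cases b; cases b') auto

lemma row_step_True_iff: "s = row_step (row_of s) True \<longleftrightarrow> s = U \<or> s = D"
  by (cases s) auto

lemma mem_cells_twoRow: "(r, y) \<in> cells (twoRow b c) \<longleftrightarrow> r = 0 \<and> y < b \<or> r = 1 \<and> y < c"
  unfolding cells_def twoRow_def by (auto simp: less_2_cases_iff nth_Cons split: nat.splits)

lemma mem_cells_twoRow_count:
  "(r, y) \<in> cells (twoRow (count_list p U) (count_list p D))
     \<longleftrightarrow> r \<le> 1 \<and> y < count_list p (row_step r True)"
  by (cases r) (auto simp: mem_cells_twoRow)

lemma sum_list_twoRow [simp]: "sum_list (twoRow b c) = b + c"
  by (simp add: twoRow_def)

lemma cells_left_closed: "(r, y) \<in> cells lam \<Longrightarrow> y' \<le> y \<Longrightarrow> (r, y') \<in> cells lam"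
  by (simp add: cells_def)

text \<open>Step \<open>j\<close> of a path (0-indexed) becomes entry \<open>j + 1\<close> of its filling.\<close>

definition cell_of_step :: "step list \<Rightarrow> nat \<Rightarrow> nat \<times> nat" where
  "cell_of_step p j =
     (row_of (p ! j), count_list (take (Suc j) p) (row_step (row_of (p ! j)) True) - 1)"

definition path_filling :: "step list \<Rightarrow> nat \<times> nat \<Rightarrow> nat set" where
  "path_filling p x = {Suc j |j. j < length p \<and> cell_of_step p j = x}"

lemma count_row_opener:
  assumes "ballotlike p" "j < length p"
  shows "count_list (take (Suc j) p) (row_step (row_of (p ! j)) True) = Suc (snd (cell_of_step p j))"
proof -
  have "0 < count_list (take (Suc j) p) (row_step (row_of (p ! j)) True)"
  proof (cases "p ! j")
    case Hu
    then have "0 < count_list (take j p) U"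
      using ballotlike_Hu_count_less[OF assms] by simp
    then show ?thesis
      using Hu count_list_take_mono[of j "Suc j" p U] by simp
  next
    case Hd
    then have "0 < count_list (take j p) D"
      using ballotlike_Hd_count_pos[OF assms] by simp
    then show ?thesis
      using Hd count_list_take_mono[of j "Suc j" p D] by simp
  qed (simp_all add: count_list_take_Suc[OF assms(2)])
  then show ?thesis by (simp add: cell_of_step_def)
qed

lemma cell_of_step_in_cells:
  assumes "ballotlike p" "j < length p"
  shows "cell_of_step p j \<in> cells (twoRow (count_list p U) (count_list p D))"
proof -
  let ?s = "row_step (row_of (p ! j)) True"
  have "count_list (take (Suc j) p) ?s \<le> count_list p ?s"
    using count_list_take_mono[of "Suc j" "length p" p] assms(2) by simp
  then have "snd (cell_of_step p j) < count_list p ?s"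
    using count_row_opener[OF assms] by simp
  then show ?thesis
    by (cases "p ! j") (auto simp: cell_of_step_def mem_cells_twoRow)
qed

lemma cell_of_step_order:
  assumes bl: "ballotlike p" and j: "j < length p" and j': "j' < length p"
    and ne: "cell_of_step p j \<noteq> cell_of_step p j'"
    and row: "fst (cell_of_step p j) \<le> fst (cell_of_step p j')"
    and col: "snd (cell_of_step p j) \<le> snd (cell_of_step p j')"
  shows "j < j'"
proof (rule ccontr)
  assume "\<not> j < j'"
  with ne have "Suc j' \<le> j" by (cases "j = j'") auto
  note count_j = count_row_opener[OF bl j] and count_j' = count_row_opener[OF bl j']
  consider "row_of (p ! j) = row_of (p ! j')" | "row_of (p ! j) = 0" "row_of (p ! j') = 1"
    | "row_of (p ! j) = 1" "row_of (p ! j') = 0"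
    using row_of_le_1[of "p ! j"] row_of_le_1[of "p ! j'"] by linarith
  then show False
  proof cases
    case 1
    then have "snd (cell_of_step p j') \<le> snd (cell_of_step p j)"
      using count_j count_j' \<open>Suc j' \<le> j\<close>
        count_list_take_mono[of "Suc j'" "Suc j" p "row_step (row_of (p ! j)) True"] by simp
    with 1 ne col show False by (simp add: cell_of_step_def prod_eq_iff)
  next
    case 2
    \<comment> \<open>The row-0 step \<open>j\<close> would join a cell while the height is \<open>0\<close>.\<close>
    then have U: "p ! j = U \<or> p ! j = Hu"
      by (cases "p ! j") auto
    let ?U = "\<lambda>k. count_list (take k p) U" and ?D = "\<lambda>k. count_list (take k p) D"
    have "?D (Suc j') \<le> ?U (Suc j')"
      using ballotlike_count_le[OF bl, of "Suc j'"] j' by simp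
    moreover have "?U (Suc j') \<le> ?U j" "?U j \<le> ?U (Suc j)" "?D (Suc j') \<le> ?D j"
      using \<open>Suc j' \<le> j\<close> by (simp_all add: count_list_take_mono)
    moreover have "?U (Suc j) \<le> ?D (Suc j')"
      using count_j count_j' 2 col by simp
    ultimately have "?U j = ?U (Suc j)" "?U j \<le> ?D j"
      by linarith+
    then have "p ! j = Hu"
      using U count_list_take_Suc[OF j, of U] by auto
    then show False
      using ballotlike_Hu_count_less[OF bl j] \<open>?U j \<le> ?D j\<close> by simp
  next
    case 3
    then show False using row by (simp add: cell_of_step_def)
  qed
qed

lemma path_filling_nonempty:
  assumes bl: "ballotlike p" and x: "x \<in> cells (twoRow (count_list p U) (count_list p D))"
  shows "path_filling p x \<noteq> {}"
proof -
  obtain r y where x: "x = (r, y)" and r: "r \<le> 1" and y: "y < count_list p (row_step r True)"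
    using x by (cases x) (simp add: mem_cells_twoRow_count)
  then obtain j where j: "j < length p" "p ! j = row_step r True"
    "count_list (take j p) (row_step r True) = y"
    using count_list_take_nth[OF y] by blast
  then have "cell_of_step p j = x"
    using x by (simp add: cell_of_step_def count_list_take_Suc[OF j(1)] row_of_row_step[OF r])
  then show ?thesis using j(1) by (auto simp: path_filling_def)
qed

lemma finite_path_filling: "finite (path_filling p x)"
  by (rule finite_subset[of _ "Suc ` {..<length p}"]) (auto simp: path_filling_def)

lemma path_filling_in_SYTplus:
  assumes bl: "ballotlike p"
  defines "lam \<equiv> twoRow (count_list p U) (count_list p D)"
  shows "path_filling p \<in> SYTplus (length p - count_list p U - count_list p D) lam"
  unfolding SYTplus_def mem_Collect_eq
proof (intro conjI ballI allI impI)
  fix x assume "x \<notin> cells lam"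
  then show "path_filling p x = {}"
    using cell_of_step_in_cells[OF bl] by (auto simp: path_filling_def lam_def)
next
  fix x assume "x \<in> cells lam"
  then show "path_filling p x \<noteq> {}"
    using path_filling_nonempty[OF bl] by (simp add: lam_def)
next
  have "sum_list lam + (length p - count_list p U - count_list p D) = length p"
    using count_list_U_D_le_length[of p] by (simp add: lam_def)
  moreover have "(\<Union>x\<in>cells lam. path_filling p x) = {1..length p}"
  proof
    show "{1..length p} \<subseteq> (\<Union>x\<in>cells lam. path_filling p x)"
    proof
      fix m assume m: "m \<in> {1..length p}"
      then have j: "m - 1 < length p" "m = Suc (m - 1)" by auto
      then have "m \<in> path_filling p (cell_of_step p (m - 1))"
        unfolding path_filling_def by blast
      then show "m \<in> (\<Union>x\<in>cells lam. path_filling p x)"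
        using cell_of_step_in_cells[OF bl j(1)] by (auto simp: lam_def)
    qed
  qed (auto simp: path_filling_def)
  ultimately show "(\<Union>x\<in>cells lam. path_filling p x)
      = {1..sum_list lam + (length p - count_list p U - count_list p D)}"
    by simp
next
  fix x y :: "nat \<times> nat" assume "x \<noteq> y"
  then show "path_filling p x \<inter> path_filling p y = {}"
    by (auto simp: path_filling_def)
next
  fix x y assume x: "x \<in> cells lam" and y: "y \<in> cells lam"
    and xy: "x \<noteq> y \<and> fst x \<le> fst y \<and> snd x \<le> snd y"
  have "Max (path_filling p x) \<in> path_filling p x" "Min (path_filling p y) \<in> path_filling p y"
    using finite_path_filling path_filling_nonempty[OF bl] x y by (simp_all add: lam_def)
  then obtain j j' where "Max (path_filling p x) = Suc j" "j < length p" "cell_of_step p j = x"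
    and "Min (path_filling p y) = Suc j'" "j' < length p" "cell_of_step p j' = y"
    by (auto simp: path_filling_def)
  then show "Max (path_filling p x) < Min (path_filling p y)"
    using cell_of_step_order[OF bl] xy by simp
qed

lemma path_filling_inj:
  assumes p: "ballotlike p" and q: "ballotlike q" and len: "length p = length q"
    and eq: "path_filling p = path_filling q"
  shows "p = q"
proof -
  have same_cell: "cell_of_step p j = cell_of_step q j" if "j < length p" for j
  proof -
    have "Suc j \<in> path_filling q (cell_of_step p j)"
      using that eq[symmetric] by (auto simp: path_filling_def)
    then show ?thesis by (auto simp: path_filling_def)
  qed
  have "take t p = take t q" if "t \<le> length p" for t
    using that
  proof (induction t)
    case (Suc t)
    then have t: "t < length p" "t < length q" and prefix: "take t p = take t q"
      using len by auto
    let ?r = "row_of (p ! t)"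
    have row: "row_of (q ! t) = ?r"
      using same_cell[OF t(1)] by (simp add: cell_of_step_def)
    have "count_list (take (Suc t) p) (row_step ?r True) = count_list (take (Suc t) q) (row_step ?r True)"
      using count_row_opener[OF p t(1)] count_row_opener[OF q t(2)] same_cell[OF t(1)] row by simp
    then have "p ! t = row_step ?r True \<longleftrightarrow> q ! t = row_step ?r True"
      using count_list_take_Suc[OF t(1), of "row_step ?r True"]
        count_list_take_Suc[OF t(2), of "row_step ?r True"] prefix by (simp split: if_splits)
    then have "p ! t = q ! t"
      using row_step_row_of[of "p ! t"] row_step_row_of[of "q ! t"] row
        row_step_True_iff[of "p ! t"] row_step_True_iff[of "q ! t"] by (metis (full_types))
    then show ?case using prefix t by (simp add: take_Suc_conv_app_nth)
  qed simp
  then show ?thesis using len by (metis order_refl take_all)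
qed

section \<open>Recovering the path from a filling\<close>

lemma finite_cells_row: "finite {y. (r, y) \<in> cells lam \<and> P y}"
  by (rule finite_subset[of _ "{..<lam ! r}"]) (auto simp: cells_def)

locale two_row_filling =
  fixes F :: "nat \<times> nat \<Rightarrow> nat set" and k b c :: nat
  assumes filling: "F \<in> SYTplus k (twoRow b c)" and c_le_b: "c \<le> b"
begin

definition N :: nat where "N = b + c + k"

lemma F_outside: "x \<notin> cells (twoRow b c) \<Longrightarrow> F x = {}"
  using filling unfolding SYTplus_def by blast

lemma F_nonempty: "x \<in> cells (twoRow b c) \<Longrightarrow> F x \<noteq> {}"
  using filling by (simp add: SYTplus_def)

lemma F_Union: "(\<Union>x\<in>cells (twoRow b c). F x) = {1..N}"
  using filling by (simp add: SYTplus_def N_def)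

lemma F_subset: "F x \<subseteq> {1..N}"
  using F_Union F_outside by (cases "x \<in> cells (twoRow b c)") auto

lemma finite_F: "finite (F x)"
  using F_subset by (rule finite_subset) simp

lemma F_disjoint: "x \<noteq> y \<Longrightarrow> F x \<inter> F y = {}"
  using filling F_outside unfolding SYTplus_def
  by (cases "x \<in> cells (twoRow b c)"; cases "y \<in> cells (twoRow b c)") auto

lemma F_less:
  assumes "x \<noteq> y" "fst x \<le> fst y" "snd x \<le> snd y" "a \<in> F x" "a' \<in> F y"
  shows "a < a'"
proof -
  have "x \<in> cells (twoRow b c)" "y \<in> cells (twoRow b c)"
    using assms(4,5) F_outside by blast+
  then have "Max (F x) < Min (F y)"
    using filling assms(1-3) unfolding SYTplus_def by blast
  moreover have "a \<le> Max (F x)" "Min (F y) \<le> a'"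
    using assms(4,5) finite_F by simp_all
  ultimately show ?thesis by linarith
qed

definition entry_cell :: "nat \<Rightarrow> nat \<times> nat" where
  "entry_cell m = (THE x. m \<in> F x)"

lemma entry_cell_eq: "m \<in> F x \<Longrightarrow> entry_cell m = x"
  unfolding entry_cell_def by (rule the_equality) (use F_disjoint in blast)+

lemma in_F_entry_cell: "m \<in> {1..N} \<Longrightarrow> m \<in> F (entry_cell m)"
  using F_Union entry_cell_eq by blast

lemma entry_cell_in_cells: "m \<in> {1..N} \<Longrightarrow> entry_cell m \<in> cells (twoRow b c)"
  using in_F_entry_cell F_outside by blast

definition first_entry :: "nat \<times> nat \<Rightarrow> nat" where
  "first_entry x = Min (F x)"

lemma first_entry_in_F: "x \<in> cells (twoRow b c) \<Longrightarrow> first_entry x \<in> F x"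
  unfolding first_entry_def using finite_F F_nonempty by simp

lemma first_entry_le: "a \<in> F x \<Longrightarrow> first_entry x \<le> a"
  unfolding first_entry_def using finite_F by simp

definition path_step :: "nat \<Rightarrow> step" where
  "path_step m = row_step (fst (entry_cell m)) (m = first_entry (entry_cell m))"

definition filling_path :: "step list" where
  "filling_path = map (\<lambda>j. path_step (Suc j)) [0..<N]"

lemma length_filling_path [simp]: "length filling_path = N"
  by (simp add: filling_path_def)

lemma nth_filling_path: "j < N \<Longrightarrow> filling_path ! j = path_step (Suc j)"
  by (simp add: filling_path_def)

definition opened :: "nat \<Rightarrow> nat \<Rightarrow> nat" where
  "opened r t = card {y. (r, y) \<in> cells (twoRow b c) \<and> first_entry (r, y) \<le> t}"

lemma path_step_eq_opener:
  assumes "m \<in> {1..N}" "r \<le> 1"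
  shows "path_step m = row_step r True \<longleftrightarrow> (\<exists>y. entry_cell m = (r, y) \<and> m = first_entry (r, y))"
proof -
  have "fst (entry_cell m) \<le> 1"
    using entry_cell_in_cells[OF assms(1)] by (cases "entry_cell m") (auto simp: mem_cells_twoRow)
  then show ?thesis
    using assms(2) by (cases "entry_cell m") (auto simp: path_step_def row_step_eq_iff)
qed

lemma opened_Suc:
  assumes t: "t < N" and r: "r \<le> 1"
  shows "opened r (Suc t) = opened r t + (if path_step (Suc t) = row_step r True then 1 else 0)"
proof -
  let ?C = "\<lambda>P. {y. (r, y) \<in> cells (twoRow b c) \<and> P (first_entry (r, y))}"
  have m: "Suc t \<in> {1..N}" using t by simp
  have "y \<in> ?C (\<lambda>e. e = Suc t) \<longleftrightarrow> entry_cell (Suc t) = (r, y) \<and> Suc t = first_entry (r, y)"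
    for y
  proof
    assume y: "y \<in> ?C (\<lambda>e. e = Suc t)"
    then have "Suc t \<in> F (r, y)" using first_entry_in_F by force
    with y show "entry_cell (Suc t) = (r, y) \<and> Suc t = first_entry (r, y)"
      using entry_cell_eq by simp
  next
    assume "entry_cell (Suc t) = (r, y) \<and> Suc t = first_entry (r, y)"
    then show "y \<in> ?C (\<lambda>e. e = Suc t)"
      using entry_cell_in_cells[OF m] by auto
  qed
  then have "?C (\<lambda>e. e = Suc t) = {y. entry_cell (Suc t) = (r, y) \<and> Suc t = first_entry (r, y)}"
    by blast
  also have "\<dots> = (if path_step (Suc t) = row_step r True then {snd (entry_cell (Suc t))} else {})"
    using path_step_eq_opener[OF m r] by (cases "entry_cell (Suc t)") auto
  finally have new: "card (?C (\<lambda>e. e = Suc t)) = (if path_step (Suc t) = row_step r True then 1 else 0)"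
    by simp
  have "?C (\<lambda>e. e \<le> Suc t) = ?C (\<lambda>e. e \<le> t) \<union> ?C (\<lambda>e. e = Suc t)"
    by auto
  then have "opened r (Suc t) = card (?C (\<lambda>e. e \<le> t)) + card (?C (\<lambda>e. e = Suc t))"
    unfolding opened_def by (simp add: card_Un_disjoint finite_cells_row disjoint_iff)
  then show ?thesis
    using new by (simp add: opened_def)
qed

lemma first_entry_range: "x \<in> cells (twoRow b c) \<Longrightarrow> first_entry x \<in> {1..N}"
  using first_entry_in_F F_subset by blast

lemma count_filling_path:
  assumes "r \<le> 1" "t \<le> N"
  shows "count_list (take t filling_path) (row_step r True) = opened r t"
  using assms(2)
proof (induction t)
  case 0
  have "{y. (r, y) \<in> cells (twoRow b c) \<and> first_entry (r, y) \<le> 0} = {}"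
    using first_entry_range by fastforce
  then show ?case
    unfolding opened_def by (simp only: take_0 count_list.simps card.empty)
next
  case (Suc t)
  then show ?case
    by (simp add: count_list_take_Suc nth_filling_path opened_Suc[OF _ assms(1)])
qed

lemma opened_before_entry:
  assumes m: "m \<in> {1..N}" and cell: "entry_cell m = (r, y)"
  shows "opened r (m - 1) = (if m = first_entry (r, y) then y else Suc y)"
proof -
  have ry: "(r, y) \<in> cells (twoRow b c)" and mF: "m \<in> F (r, y)"
    using entry_cell_in_cells[OF m] in_F_entry_cell[OF m] cell by simp_all
  have mem: "(r, y') \<in> cells (twoRow b c) \<and> first_entry (r, y') \<le> m - 1 \<longleftrightarrow>
      y' < y \<or> y' = y \<and> m \<noteq> first_entry (r, y)" for y'
  proof (cases y' y rule: linorder_cases)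
    case less
    then have "(r, y') \<in> cells (twoRow b c)" using cells_left_closed[OF ry] by simp
    then have "first_entry (r, y') < m"
      using F_less[of "(r, y')" "(r, y)"] first_entry_in_F mF less by simp
    then show ?thesis using less \<open>(r, y') \<in> cells (twoRow b c)\<close> by simp
  next
    case equal
    then show ?thesis using first_entry_le[OF mF] ry m by auto
  next
    case greater
    have "m < first_entry (r, y')" if "(r, y') \<in> cells (twoRow b c)"
      using F_less[of "(r, y)" "(r, y')"] first_entry_in_F[OF that] mF greater by simp
    then show ?thesis using greater by auto
  qed
  have "{y'. (r, y') \<in> cells (twoRow b c) \<and> first_entry (r, y') \<le> m - 1}
      = (if m = first_entry (r, y) then {..<y} else {..y})"
    by (rule set_eqI) (simp only: mem_Collect_eq mem split: if_split; auto)
  then show ?thesis by (simp add: opened_def)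
qed

lemma cell_of_step_filling_path:
  assumes j: "j < N" shows "cell_of_step filling_path j = entry_cell (Suc j)"
proof -
  obtain r y where cell: "entry_cell (Suc j) = (r, y)" by fastforce
  have m: "Suc j \<in> {1..N}" using j by simp
  then have r: "r \<le> 1"
    using entry_cell_in_cells cell by (force simp: mem_cells_twoRow)
  have step: "filling_path ! j = row_step r (Suc j = first_entry (r, y))"
    using cell by (simp add: nth_filling_path[OF j] path_step_def)
  have "count_list (take (Suc j) filling_path) (row_step r True) = Suc y"
    using count_filling_path[OF r] opened_Suc[OF j r] opened_before_entry[OF m cell] j step
      path_step_eq_opener[OF m r] cell
    by (simp add: nth_filling_path[OF j] row_step_eq_iff[OF r r])
  then show ?thesis
    using step cell by (simp add: cell_of_step_def row_of_row_step[OF r])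
qed

lemma path_filling_filling_path: "path_filling filling_path = F"
proof
  fix x
  show "path_filling filling_path x = F x"
  proof
    show "path_filling filling_path x \<subseteq> F x"
      using cell_of_step_filling_path in_F_entry_cell by (auto simp: path_filling_def)
  next
    show "F x \<subseteq> path_filling filling_path x"
    proof
      fix a assume a: "a \<in> F x"
      then have "a - 1 < N" "a = Suc (a - 1)"
        using F_subset by fastforce+
      moreover have "cell_of_step filling_path (a - 1) = x"
        using cell_of_step_filling_path calculation entry_cell_eq[OF a] by metis
      ultimately show "a \<in> path_filling filling_path x"
        unfolding path_filling_def by force
    qed
  qed
qed

lemma opened_all: "r \<le> 1 \<Longrightarrow> opened r N = card {y. (r, y) \<in> cells (twoRow b c)}"
  unfolding opened_def using first_entry_range by (metis (lifting) atLeastAtMost_iff)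

lemma count_filling_path_U: "count_list filling_path U = b"
  using count_filling_path[of 0 N] opened_all[of 0] by (simp add: mem_cells_twoRow)

lemma count_filling_path_D: "count_list filling_path D = c"
  using count_filling_path[of 1 N] opened_all[of 1] by (simp add: mem_cells_twoRow)

lemma opened_1_le_opened_0: "opened 1 t \<le> opened 0 t"
  unfolding opened_def
proof (rule card_mono[OF finite_cells_row], safe)
  fix y assume y: "(1, y) \<in> cells (twoRow b c)" "first_entry (1, y) \<le> t"
  then have "(0, y) \<in> cells (twoRow b c)"
    using c_le_b by (simp add: mem_cells_twoRow)
  moreover from this have "first_entry (0, y) < first_entry (1, y)"
    using F_less[of "(0, y)" "(1, y)"] first_entry_in_F y(1) by simp
  ultimately show "(0, y) \<in> cells (twoRow b c)" "first_entry (0, y) \<le> t"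
    using y(2) by simp_all
qed

lemma ballotlike_filling_path: "ballotlike filling_path"
  unfolding ballotlike_def
proof (intro conjI allI impI)
  fix t assume "t \<le> length filling_path"
  then show "0 \<le> ht (take t filling_path)"
    using count_filling_path[of 0 t] count_filling_path[of 1 t] opened_1_le_opened_0[of t]
    by (simp add: ht_eq_count)
next
  fix j assume j: "j < length filling_path" "filling_path ! j = Hu"
  then have m: "Suc j \<in> {1..N}" by simp
  obtain r y where cell: "entry_cell (Suc j) = (r, y)" by fastforce
  with j have r: "r = 0" and new: "Suc j \<noteq> first_entry (r, y)"
    by (auto simp: nth_filling_path path_step_def elim: row_step.elims)
  have "opened 1 j \<le> y"
  proof -
    have "{y'. (1, y') \<in> cells (twoRow b c) \<and> first_entry (1, y') \<le> j} \<subseteq> {..<y}"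
    proof (safe, rule ccontr)
      fix y' assume y': "(1, y') \<in> cells (twoRow b c)" "first_entry (1, y') \<le> j" "\<not> y' < y"
      then have "Suc j < first_entry (1, y')"
        using F_less[of "(0, y)" "(1, y')"] in_F_entry_cell[OF m] first_entry_in_F[OF y'(1)] cell r
        by simp
      with y'(2) show False by simp
    qed
    then show ?thesis
      unfolding opened_def using card_mono[of "{..<y}"] by fastforce
  qed
  then show "ht (take j filling_path) \<noteq> 0"
    using opened_before_entry[OF m cell] count_filling_path[of 0 j] count_filling_path[of 1 j]
      j(1) r new by (simp add: ht_eq_count)
next
  fix j assume j: "j < length filling_path" "filling_path ! j = Hd"
  then have m: "Suc j \<in> {1..N}" by simp
  obtain r y where cell: "entry_cell (Suc j) = (r, y)" by fastforce
  with j have "r \<noteq> 0" and new: "Suc j \<noteq> first_entry (r, y)"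
    by (auto simp: nth_filling_path path_step_def elim: row_step.elims)
  then have r: "r = 1"
    using entry_cell_in_cells[OF m] cell by (auto simp: mem_cells_twoRow)
  have "0 < count_list (take j filling_path) D"
    using opened_before_entry[OF m cell] count_filling_path[of 1 j] j(1) r new by simp
  then show "D \<in> set (take j filling_path)"
    by (metis count_notin less_irrefl)
qed

end

lemma bij_betw_Bal_SYTplus:
  assumes "1 \<le> n"
  shows "bij_betw (\<lambda>p. ((count_list p U, n - count_list p U - count_list p D), path_filling p))
     (Bal n i)
     (SIGMA bk : {(b, k). max i 1 \<le> b \<and> 2*b - i + k = n}.
        SYTplus (snd bk) (twoRow (fst bk) (fst bk - i)))"
  (is "bij_betw ?f _ ?T")
  unfolding bij_betw_def
proof (intro conjI subset_antisym)
  show "inj_on ?f (Bal n i)"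
    by (rule inj_onI) (auto simp: Bal_def intro: path_filling_inj)
next
  show "?f ` Bal n i \<subseteq> ?T"
  proof (rule image_subsetI)
    fix p assume "p \<in> Bal n i"
    then have bl: "ballotlike p" and len: "length p = n" and "ht p = int i"
      by (simp_all add: Bal_def)
    then have "count_list p D = count_list p U - i" and "i \<le> count_list p U"
      by (auto simp: ht_eq_count)
    moreover have "1 \<le> count_list p U"
      using ballotlike_count_U_pos[OF bl] len assms by fastforce
    moreover have "count_list p U + count_list p D \<le> n"
      using count_list_U_D_le_length[of p] len by simp
    ultimately show "?f p \<in> ?T"
      using path_filling_in_SYTplus[OF bl] len by auto
  qed
next
  show "?T \<subseteq> ?f ` Bal n i"
  proof
    fix z assume "z \<in> ?T"
    then obtain b k F where z: "z = ((b, k), F)" and bk: "max i 1 \<le> b" "2*b - i + k = n"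
      and F: "F \<in> SYTplus k (twoRow b (b - i))"
      by auto
    interpret two_row_filling F k b "b - i"
      using F by unfold_locales auto
    have "n - b - (b - i) = k"
      using bk by arith
    then have "z = ?f filling_path"
      using count_filling_path_U count_filling_path_D path_filling_filling_path z by simp
    moreover have "filling_path \<in> Bal n i"
      using ballotlike_filling_path count_filling_path_U count_filling_path_D bk
      by (simp add: Bal_def N_def ht_eq_count)
    ultimately show "z \<in> ?f ` Bal n i"
      by (rule image_eqI)
  qed
qed

theorem theorem13:
  fixes n i :: nat
  assumes "n \<ge> 2" and "i \<le> n"
  shows "int (card (Bal n i)) =
           ibinom (2*n-2) (int n - int i - 1) - ibinom (2*n-2) (int n - int i - 2)
           + ibinom (n-2) (int n - int i)
       \<and> int (card (SIGMA bk : {(b, k). max i 1 \<le> b \<and> 2*b - i + k = n}.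
                      SYTplus (snd bk) (twoRow (fst bk) (fst bk - i)))) =
           ibinom (2*n-2) (int n - int i - 1) - ibinom (2*n-2) (int n - int i - 2)
           + ibinom (n-2) (int n - int i)"
proof -
  have "int (card (Bal n i)) = bal_closed_form n i"
    using card_Bal_eq_closed_form[of "n - 2" i] assms(1) by (simp add: Suc_diff_Suc numeral_2_eq_2)
  moreover have "card (Bal n i) = card (SIGMA bk : {(b, k). max i 1 \<le> b \<and> 2*b - i + k = n}.
      SYTplus (snd bk) (twoRow (fst bk) (fst bk - i)))"
    using bij_betw_same_card[OF bij_betw_Bal_SYTplus] assms(1) by simp
  ultimately show ?thesis
    using bal_closed_form_eq[OF assms(1)] by simp
qed

end
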